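(* Let $\mathbb F$ be a field, $q\in\mathbb F$, $f,g\in\mathbb F[h]$. Then $\operatorname{GKdim}\mathcal H_q(f,g)=3$ if and only if $\deg f\le 1$. Moreover, if $\deg f>1$ then $\operatorname{GKdim}\mathcal H_q(f,g)\ge 4$.
   Context: $\mathcal H_q(f,g)$ denotes the unital associative $\mathbb F$-algebra generated by $x,y,h$ with relations $hx=xf(h)$, $yh=f(h)y$, $yx-qxy=g(h)$ (quantum generalized Heisenberg algebra). $\operatorname{GKdim}$ is Gelfand–Kirillov dimension. (Here $\deg f\le 1$ includes constant $f$.) *)

theory Defs
  imports "HOL-Computational_Algebra.Polynomial" "HOL-Library.Extended_Real"
begin

text \<open>Free associative algebra on the generators x, y, h over a field:
  elements are coefficient functions on words (finitely supported ones are the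
  genuine elements; the generated ideal below only contains such functions).\<close>

datatype gen = X | Y | H

type_synonym 'a falg = "gen list \<Rightarrow> 'a"

definition fa_word :: "gen list \<Rightarrow> 'a::zero_neq_one falg" where
  "fa_word u = (\<lambda>w. if w = u then 1 else 0)"

definition fa_add :: "'a::comm_ring_1 falg \<Rightarrow> 'a falg \<Rightarrow> 'a falg" where
  "fa_add p r = (\<lambda>w. p w + r w)"

definition fa_sub :: "'a::comm_ring_1 falg \<Rightarrow> 'a falg \<Rightarrow> 'a falg" where
  "fa_sub p r = (\<lambda>w. p w - r w)"

definition fa_smult :: "'a::comm_ring_1 \<Rightarrow> 'a falg \<Rightarrow> 'a falg" where
  "fa_smult c p = (\<lambda>w. c * p w)"

definition fa_mult :: "'a::comm_ring_1 falg \<Rightarrow> 'a falg \<Rightarrow> 'a falg" where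
  "fa_mult p r = (\<lambda>w. \<Sum>i\<le>length w. p (take i w) * r (drop i w))"

definition fa_poly_h :: "'a::comm_ring_1 poly \<Rightarrow> 'a falg" where
  "fa_poly_h p = (\<lambda>w. if w = replicate (length w) H then coeff p (length w) else 0)"

inductive_set ideal_gen :: "'a::comm_ring_1 falg set \<Rightarrow> 'a falg set" for R where
  rel: "r \<in> R \<Longrightarrow> r \<in> ideal_gen R"
| zero: "(\<lambda>_. 0) \<in> ideal_gen R"
| add: "a \<in> ideal_gen R \<Longrightarrow> b \<in> ideal_gen R \<Longrightarrow> fa_add a b \<in> ideal_gen R"
| smult: "a \<in> ideal_gen R \<Longrightarrow> fa_smult c a \<in> ideal_gen R"
| lmult: "a \<in> ideal_gen R \<Longrightarrow> fa_mult (fa_word u) a \<in> ideal_gen R"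
| rmult: "a \<in> ideal_gen R \<Longrightarrow> fa_mult a (fa_word u) \<in> ideal_gen R"

definition Hq_rels :: "'a::field \<Rightarrow> 'a poly \<Rightarrow> 'a poly \<Rightarrow> 'a falg set" where
  "Hq_rels q f g =
     { fa_sub (fa_word [H, X]) (fa_mult (fa_word [X]) (fa_poly_h f)),
       fa_sub (fa_word [Y, H]) (fa_mult (fa_poly_h f) (fa_word [Y])),
       fa_sub (fa_sub (fa_word [Y, X]) (fa_smult q (fa_word [X, Y]))) (fa_poly_h g) }"

definition indep_mod :: "'a::field falg set \<Rightarrow> gen list set \<Rightarrow> bool" where
  "indep_mod I W \<longleftrightarrow>
     (\<forall>c. (\<forall>w. w \<notin> W \<longrightarrow> c w = 0) \<longrightarrow> c \<in> I \<longrightarrow> (\<forall>w\<in>W. c w = 0))"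

text \<open>d(n) = dim of the image of the span of words of length \<le> n (generating
  subspace V = span{1,x,y,h}, so this is dim of sum of V^k, k \<le> n) in the
  quotient algebra: the maximal number of such words independent modulo I.\<close>
definition growth :: "'a::field falg set \<Rightarrow> nat \<Rightarrow> nat" where
  "growth I n = Max {card W | W. W \<subseteq> {w. length w \<le> n} \<and> indep_mod I W}"

definition GKdim_pres :: "'a::field falg set \<Rightarrow> ereal" where
  "GKdim_pres I = limsup (\<lambda>n. ereal (ln (real (growth I n)) / ln (real n)))"

definition GKdim_Hq :: "'a::field \<Rightarrow> 'a poly \<Rightarrow> 'a poly \<Rightarrow> ereal" where
  "GKdim_Hq q f g = GKdim_pres (ideal_gen (Hq_rels q f g))"

end

theory Submission
  imports Defs "HOL-Library.Function_Algebras" "HOL-Real_Asymp.Real_Asymp"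
begin

(* Give x and y the weight M = max 1 (deg g) and h the weight 1.  When deg f \<le> 1, rewriting with
   hx = x f(h), yh = f(h) y and yx = q xy + g(h) never increases the weight, so modulo the relations
   every word of length \<le> n is a combination of ordered words x^a h^b y^c of weight \<le> M n.  There
   are at most (M n + 1)^3 of these, whence GKdim \<le> 3.

   For the lower bounds the free algebra acts on coefficient vectors of ordered words, by the formulas
   for left multiplication; the relations act by zero.  Applied to 1, the ordered words x^a h^b y^c
   of length \<le> n give (n/3)^3 independent vectors, so GKdim \<ge> 3.  If d = deg f \<ge> 2 and f_j is
   the j-fold composite of f, the word h^b1 x^m h^b2 x^m h^b3 y^c gives
   x^(2m) f_2m(h)^b1 f_m(h)^b2 h^b3 y^c, whose h-degree (b1 d^m + b2) d^m + b3 records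
   b1, b2, b3 < m as digits in base d^m.  This gives (n/6)^4 independent words of length \<le> n,
   so GKdim \<ge> 4. *)

lemma fa_add_eq_plus [simp]: "fa_add = (+)"
  by (intro ext) (simp add: fa_add_def)

lemma fa_sub_eq_minus [simp]: "fa_sub = (-)"
  by (intro ext) (simp add: fa_sub_def)

lemma fa_smult_apply: "fa_smult c p w = c * p w"
  by (simp add: fa_smult_def)

lemma sum_fun_apply: "(\<Sum>s\<in>S. F s) w = (\<Sum>s\<in>S. F s w)"
  by (induction S rule: infinite_finite_induct) auto

interpretation falg: vector_space "fa_smult :: 'a::field \<Rightarrow> 'a falg \<Rightarrow> 'a falg"
  by unfold_locales (auto simp: fa_smult_def algebra_simps)

definition supp :: "'a::zero falg \<Rightarrow> gen list set" where
  "supp p = {w. p w \<noteq> 0}"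

lemma supp_fa_word: "supp (fa_word u :: 'a::zero_neq_one falg) = {u}"
  by (auto simp: supp_def fa_word_def)

lemma fa_mult_word_left:
  "fa_mult (fa_word u) p =
     (\<lambda>w. if length u \<le> length w \<and> take (length u) w = u then p (drop (length u) w) else 0)"
proof (rule ext)
  fix w
  have "fa_mult (fa_word u) p w =
      (\<Sum>i\<le>length w. if i = length u \<and> take (length u) w = u then p (drop (length u) w) else 0)"
    unfolding fa_mult_def fa_word_def by (rule sum.cong) auto
  also have "\<dots> = (if length u \<le> length w \<and> take (length u) w = u then p (drop (length u) w) else 0)"
    by (cases "take (length u) w = u") (auto simp: sum.delta)
  finally show "fa_mult (fa_word u) p w = \<dots>" .
qed

lemma fa_mult_word_right:
  "fa_mult p (fa_word v) =
     (\<lambda>w. if length v \<le> length w \<and> drop (length w - length v) w = v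
          then p (take (length w - length v) w) else 0)"
proof (rule ext)
  fix w
  have "fa_mult p (fa_word v) w =
      (\<Sum>i\<le>length w. if i = length w - length v \<and> length v \<le> length w \<and> drop (length w - length v) w = v
                      then p (take (length w - length v) w) else 0)"
    unfolding fa_mult_def fa_word_def by (rule sum.cong) auto
  also have "\<dots> = (if length v \<le> length w \<and> drop (length w - length v) w = v
                    then p (take (length w - length v) w) else 0)"
    by (cases "length v \<le> length w \<and> drop (length w - length v) w = v") (auto simp: sum.delta)
  finally show "fa_mult p (fa_word v) w = \<dots>" .
qed

lemma fa_mult_words [simp]: "fa_mult (fa_word u) (fa_word v) = (fa_word (u @ v) :: 'a::comm_ring_1 falg)"
  unfolding fa_mult_word_left
  by (rule ext) (auto simp: fa_word_def append_eq_conv_conj, metis append_take_drop_id)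

lemma fa_mult_sum_left: "fa_mult (\<Sum>s\<in>S. F s) r = (\<Sum>s\<in>S. fa_mult (F s) r)"
  unfolding fa_mult_def
  by (rule ext) (simp add: sum_fun_apply sum_distrib_right sum.swap[of _ S])

lemma fa_mult_sum_right: "fa_mult r (\<Sum>s\<in>S. F s) = (\<Sum>s\<in>S. fa_mult r (F s))"
  unfolding fa_mult_def
  by (rule ext) (simp add: sum_fun_apply sum_distrib_left sum.swap[of _ S])

lemma fa_mult_smult_left: "fa_mult (fa_smult c p) r = fa_smult c (fa_mult p r)"
  unfolding fa_mult_def fa_smult_def
  by (rule ext) (simp add: sum_distrib_left mult.assoc)

lemma fa_mult_smult_right: "fa_mult r (fa_smult c p) = fa_smult c (fa_mult r p)"
  unfolding fa_mult_def fa_smult_def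
  by (rule ext) (simp add: sum_distrib_left mult.left_commute)

lemma fa_mult_diff_left: "fa_mult (p - p') r = fa_mult p r - fa_mult p' r"
  unfolding fa_mult_def
  by (rule ext) (simp add: left_diff_distrib sum_subtractf)

lemma fa_mult_diff_right: "fa_mult r (p - p') = fa_mult r p - fa_mult r p'"
  unfolding fa_mult_def
  by (rule ext) (simp add: right_diff_distrib sum_subtractf)

lemma fa_mult_add_left: "fa_mult (p + p') r = fa_mult p r + fa_mult p' r"
  unfolding fa_mult_def
  by (rule ext) (simp add: distrib_right sum.distrib)

lemma fa_mult_add_right: "fa_mult r (p + p') = fa_mult r p + fa_mult r p'"
  unfolding fa_mult_def
  by (rule ext) (simp add: distrib_left sum.distrib)

lemma fa_poly_h_eq_sum:
  fixes p :: "'a::comm_ring_1 poly"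
  assumes "degree p \<le> N"
  shows "fa_poly_h p = (\<Sum>k\<le>N. fa_smult (coeff p k) (fa_word (replicate k H)))"
proof (rule ext)
  fix w :: "gen list"
  have "(\<Sum>k\<le>N. fa_smult (coeff p k) (fa_word (replicate k H))) w =
        (\<Sum>k\<le>N. if w = replicate k H then coeff p k else 0)"
    unfolding sum_fun_apply by (rule sum.cong) (auto simp: fa_word_def fa_smult_apply)
  also have "\<dots> = fa_poly_h p w"
  proof (cases "w = replicate (length w) H")
    case True
    then have "w = replicate k H \<longleftrightarrow> k = length w" for k
      by (metis length_replicate)
    then show ?thesis
      using True assms by (simp add: fa_poly_h_def sum.delta' coeff_eq_0)
  next
    case False
    then have "w \<noteq> replicate k H" for k
      by auto
    then show ?thesis
      using False by (simp add: fa_poly_h_def)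
  qed
  finally show "fa_poly_h p w = (\<Sum>k\<le>N. fa_smult (coeff p k) (fa_word (replicate k H))) w" ..
qed

lemma module_hom_fa_mult_left: "module_hom fa_smult fa_smult (fa_mult (r :: 'a::field falg))"
  by unfold_locales
    (simp_all add: fa_mult_add_right fa_mult_smult_right falg.scale_right_distrib falg.scale_left_distrib)

lemma supp_mult_word_left: "supp (fa_mult (fa_word u) p) \<subseteq> (\<lambda>t. u @ t) ` supp p"
proof
  fix w assume "w \<in> supp (fa_mult (fa_word u) p)"
  then have w: "take (length u) w = u" "drop (length u) w \<in> supp p"
    by (auto simp: supp_def fa_mult_word_left split: if_splits)
  then have "w = u @ drop (length u) w"
    by (metis append_take_drop_id)
  then show "w \<in> (\<lambda>t. u @ t) ` supp p"
    using w(2) by blast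
qed

lemma supp_mult_word_right: "supp (fa_mult p (fa_word u)) \<subseteq> (\<lambda>t. t @ u) ` supp p"
proof
  fix w assume "w \<in> supp (fa_mult p (fa_word u))"
  then have w: "drop (length w - length u) w = u" "take (length w - length u) w \<in> supp p"
    by (auto simp: supp_def fa_mult_word_right split: if_splits)
  then have "w = take (length w - length u) w @ u"
    by (metis append_take_drop_id)
  then show "w \<in> (\<lambda>t. t @ u) ` supp p"
    using w(2) by blast
qed

lemma supp_fa_poly_h: "supp (fa_poly_h p) \<subseteq> (\<lambda>k. replicate k H) ` {..degree p}"
  by (auto simp: supp_def fa_poly_h_def intro!: image_eqI le_degree split: if_splits)

lemma finite_supp_fa_word: "finite (supp (fa_word u :: 'a::zero_neq_one falg))"
  by (simp add: supp_fa_word)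

lemma finite_supp_fa_poly_h: "finite (supp (fa_poly_h p))"
  by (rule finite_subset[OF supp_fa_poly_h]) simp

lemma finite_supp_diff:
  fixes p r :: "'a::group_add falg"
  shows "finite (supp p) \<Longrightarrow> finite (supp r) \<Longrightarrow> finite (supp (p - r))"
  by (rule finite_subset[of _ "supp p \<union> supp r"]) (auto simp: supp_def)

lemma finite_supp_add:
  fixes p r :: "'a::monoid_add falg"
  shows "finite (supp p) \<Longrightarrow> finite (supp r) \<Longrightarrow> finite (supp (p + r))"
  by (rule finite_subset[of _ "supp p \<union> supp r"]) (auto simp: supp_def)

lemma finite_supp_smult: "finite (supp p) \<Longrightarrow> finite (supp (fa_smult k p))"
  by (rule finite_subset[of _ "supp p"]) (auto simp: supp_def fa_smult_apply)

lemma finite_supp_mult_word_left: "finite (supp p) \<Longrightarrow> finite (supp (fa_mult (fa_word u) p))"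
  by (rule finite_subset[OF supp_mult_word_left]) simp

lemma finite_supp_mult_word_right: "finite (supp p) \<Longrightarrow> finite (supp (fa_mult p (fa_word u)))"
  by (rule finite_subset[OF supp_mult_word_right]) simp

lemma falg_subspace_ideal_gen: "falg.subspace (ideal_gen R)"
  unfolding falg.subspace_def
  using ideal_gen.zero[of R] ideal_gen.add[of _ R] ideal_gen.smult[of _ R]
  by (simp add: zero_fun_def)

section \<open>Reduction modulo an ideal and growth\<close>

definition reduces_to :: "'a::field falg set \<Rightarrow> gen list set \<Rightarrow> 'a falg \<Rightarrow> bool" where
  "reduces_to I S p \<longleftrightarrow> (\<exists>c \<in> falg.span (fa_word ` S). p - c \<in> I)"

lemma reduces_to_word:
  assumes "w \<in> S"
  shows "reduces_to (ideal_gen R) S (fa_word w)"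
proof -
  have "fa_word w - fa_word w \<in> ideal_gen R"
    using falg.subspace_0[OF falg_subspace_ideal_gen] by simp
  moreover have "fa_word w \<in> falg.span (fa_word ` S)"
    using assms by (intro falg.span_base) simp
  ultimately show ?thesis
    unfolding reduces_to_def by blast
qed

lemma reduces_to_mono: "reduces_to I S p \<Longrightarrow> S \<subseteq> S' \<Longrightarrow> reduces_to I S' p"
  unfolding reduces_to_def by (meson falg.span_mono image_mono subsetD)

lemma reduces_to_congruent:
  assumes "p - r \<in> ideal_gen R" and "reduces_to (ideal_gen R) S r"
  shows "reduces_to (ideal_gen R) S p"
proof -
  obtain c where c: "c \<in> falg.span (fa_word ` S)" "r - c \<in> ideal_gen R"
    using assms(2) unfolding reduces_to_def by blast
  have "p - c = (p - r) + (r - c)" by simp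
  then have "p - c \<in> ideal_gen R"
    using falg.subspace_add[OF falg_subspace_ideal_gen assms(1) c(2)] by simp
  then show ?thesis using c(1) unfolding reduces_to_def by blast
qed

lemma falg_subspace_reduces_to: "falg.subspace {p. reduces_to (ideal_gen R) S p}"
proof -
  let ?I = "ideal_gen R" and ?V = "falg.span (fa_word ` S)"
  have zero: "reduces_to ?I S 0"
    unfolding reduces_to_def
    by (auto intro!: bexI[of _ 0] falg.span_zero falg.subspace_0[OF falg_subspace_ideal_gen])
  have scale: "reduces_to ?I S (fa_smult k p)" if p: "reduces_to ?I S p" for k p
  proof -
    obtain c where c: "c \<in> ?V" "p - c \<in> ?I" using p unfolding reduces_to_def by blast
    have "fa_smult k p - fa_smult k c = fa_smult k (p - c)"
      by (simp add: falg.scale_right_diff_distrib)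
    also have "\<dots> \<in> ?I" by (rule falg.subspace_scale[OF falg_subspace_ideal_gen c(2)])
    finally show ?thesis unfolding reduces_to_def using falg.span_scale[OF c(1)] by blast
  qed
  have add: "reduces_to ?I S (p + r)" if p: "reduces_to ?I S p" and r: "reduces_to ?I S r" for p r
  proof -
    obtain c where c: "c \<in> ?V" "p - c \<in> ?I" using p unfolding reduces_to_def by blast
    obtain d where d: "d \<in> ?V" "r - d \<in> ?I" using r unfolding reduces_to_def by blast
    have "(p + r) - (c + d) = (p - c) + (r - d)" by simp
    also have "\<dots> \<in> ?I" by (rule falg.subspace_add[OF falg_subspace_ideal_gen c(2) d(2)])
    finally show ?thesis unfolding reduces_to_def using falg.span_add[OF c(1) d(1)] by blast
  qed
  show ?thesis
    unfolding falg.subspace_def using zero scale add by blast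
qed

lemma reduces_to_lincomb:
  assumes "\<And>k. k \<in> K \<Longrightarrow> reduces_to (ideal_gen R) S (F k)"
  shows "reduces_to (ideal_gen R) S (\<Sum>k\<in>K. fa_smult (c k) (F k))"
proof -
  have "(\<Sum>k\<in>K. fa_smult (c k) (F k)) \<in> {p. reduces_to (ideal_gen R) S p}"
    using assms
    by (intro falg.subspace_sum[OF falg_subspace_reduces_to] falg.subspace_scale[OF falg_subspace_reduces_to])
      simp
  then show ?thesis
    by simp
qed

lemma reduces_to_mult_word:
  assumes p: "reduces_to (ideal_gen R) S p"
    and words: "\<And>t. t \<in> S \<Longrightarrow> reduces_to (ideal_gen R) S' (fa_word (u @ t))"
  shows "reduces_to (ideal_gen R) S' (fa_mult (fa_word u) p)"
proof -
  obtain c where c: "c \<in> falg.span (fa_word ` S)" "p - c \<in> ideal_gen R"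
    using p unfolding reduces_to_def by blast
  have "fa_mult (fa_word u) p - fa_mult (fa_word u) c \<in> ideal_gen R"
    using ideal_gen.lmult[OF c(2)] by (simp add: fa_mult_diff_right)
  moreover have "fa_mult (fa_word u) c \<in> {r. reduces_to (ideal_gen R) S' r}"
  proof -
    have "fa_mult (fa_word u) c \<in> fa_mult (fa_word u) ` falg.span (fa_word ` S)"
      using c(1) by blast
    also have "\<dots> = falg.span (fa_word ` (\<lambda>t. u @ t) ` S)"
      unfolding module_hom.span_image[OF module_hom_fa_mult_left, symmetric] image_image
      by simp
    also have "\<dots> \<subseteq> {r. reduces_to (ideal_gen R) S' r}"
      using words by (intro falg.span_minimal falg_subspace_reduces_to) auto
    finally show ?thesis .
  qed
  ultimately show ?thesis
    using reduces_to_congruent by blast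
qed

lemma sum_smult_reductions_eq_0_imp:
  fixes R :: "'a::field falg set"
  assumes W: "finite W" and indep: "indep_mod (ideal_gen R) W"
    and C: "\<And>w. w \<in> W \<Longrightarrow> fa_word w - C w \<in> ideal_gen R"
    and sum_eq_0: "(\<Sum>w\<in>W. fa_smult (u w) (C w)) = 0"
  shows "\<forall>w\<in>W. u w = 0"
proof -
  let ?p = "\<Sum>w\<in>W. fa_smult (u w) (fa_word w - C w)"
  have p_in: "?p \<in> ideal_gen R"
    using C falg_subspace_ideal_gen by (intro falg.subspace_sum falg.subspace_scale) auto
  have p_eq: "?p = (\<Sum>w\<in>W. fa_smult (u w) (fa_word w))"
    using sum_eq_0 by (simp add: falg.scale_right_diff_distrib sum_subtractf)
  have "?p v = (\<Sum>w\<in>W. if w = v then u v else 0)" for v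
    unfolding p_eq sum_fun_apply by (intro sum.cong) (auto simp: fa_word_def fa_smult_apply)
  then have "?p v = (if v \<in> W then u v else 0)" for v
    using W by (simp add: sum.delta')
  then show ?thesis
    using indep[unfolded indep_mod_def, rule_format, of ?p] p_in by simp
qed

lemma inj_on_independent_reductions:
  fixes R :: "'a::field falg set"
  assumes W: "finite W" and indep: "indep_mod (ideal_gen R) W"
    and C: "\<And>w. w \<in> W \<Longrightarrow> fa_word w - C w \<in> ideal_gen R"
  shows "inj_on C W \<and> falg.independent (C ` W)"
proof
  note coeffs_vanish = sum_smult_reductions_eq_0_imp[OF W indep C]
  show inj: "inj_on C W"
  proof (rule inj_onI)
    fix w w' assume w: "w \<in> W" "w' \<in> W" "C w = C w'"
    show "w = w'"
    proof (rule ccontr)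
      assume ne: "w \<noteq> w'"
      define u where "u = (\<lambda>v. if v = w then 1 else if v = w' then -1 else (0::'a))"
      have "(\<Sum>v\<in>W. fa_smult (u v) (C v)) = (\<Sum>v\<in>{w, w'}. fa_smult (u v) (C v))"
        using W w by (intro sum.mono_neutral_right) (auto simp: u_def)
      also have "\<dots> = 0"
        using ne w(3) by (simp add: u_def falg.scale_minus_left)
      finally have "u w = 0"
        using coeffs_vanish[of u] w(1) by blast
      then show False
        by (simp add: u_def)
    qed
  qed
  show "falg.independent (C ` W)"
  proof
    assume "falg.dependent (C ` W)"
    then obtain u where u: "\<exists>v\<in>C ` W. u v \<noteq> 0" "(\<Sum>v\<in>C ` W. fa_smult (u v) v) = 0"
      using falg.dependent_finite[OF finite_imageI[OF W]] by blast
    then have "(\<Sum>w\<in>W. fa_smult (u (C w)) (C w)) = 0"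
      by (simp add: sum.reindex[OF inj])
    then have "\<forall>w\<in>W. u (C w) = 0"
      using coeffs_vanish[of "\<lambda>w. u (C w)"] by simp
    then show False
      using u(1) by blast
  qed
qed

lemma card_le_if_reduces_to:
  fixes R :: "'a::field falg set"
  assumes S: "finite S" and W: "finite W"
    and indep: "indep_mod (ideal_gen R) W"
    and reduces: "\<And>w. w \<in> W \<Longrightarrow> reduces_to (ideal_gen R) S (fa_word w)"
  shows "card W \<le> card S"
proof -
  have "\<forall>w\<in>W. \<exists>c. c \<in> falg.span (fa_word ` S) \<and> fa_word w - c \<in> ideal_gen R"
    using reduces unfolding reduces_to_def by blast
  then obtain C where C: "\<And>w. w \<in> W \<Longrightarrow> C w \<in> falg.span (fa_word ` S)"
    "\<And>w. w \<in> W \<Longrightarrow> fa_word w - C w \<in> ideal_gen R"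
    by (metis bchoice)
  have inj: "inj_on C W" and "falg.independent (C ` W)"
    using inj_on_independent_reductions[OF W indep C(2)] by auto
  moreover have "C ` W \<subseteq> falg.span (fa_word ` S)"
    using C(1) by blast
  ultimately have "card (C ` W) \<le> card (fa_word ` S :: 'a falg set)"
    using falg.independent_span_bound[OF finite_imageI[OF S]] by blast
  also have "\<dots> \<le> card S"
    using S by (rule card_image_le)
  finally show ?thesis
    using card_image[OF inj] by simp
qed

lemma finite_words_up_to: "finite {w :: gen list. length w \<le> n}"
proof -
  have UNIV_gen: "(UNIV :: gen set) = {X, Y, H}"
    using gen.exhaust by auto
  have "finite (UNIV :: gen set)"
    unfolding UNIV_gen by simp
  then show ?thesis
    using finite_lists_length_le[of "UNIV :: gen set" n] by simp
qed

lemma finite_indep_cards: "finite {card W |W. W \<subseteq> {w. length w \<le> n} \<and> indep_mod I W}"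
proof -
  have "{card W |W. W \<subseteq> {w. length w \<le> n} \<and> indep_mod I W} \<subseteq> card ` Pow {w :: gen list. length w \<le> n}"
    by blast
  then show ?thesis
    using finite_subset finite_words_up_to by blast
qed

lemma card_le_growth:
  assumes "W \<subseteq> {w. length w \<le> n}" and "indep_mod I W"
  shows "card W \<le> growth I n"
  unfolding growth_def using assms by (intro Max_ge[OF finite_indep_cards]) blast

lemma growth_le_card_if_reduces_to:
  fixes R :: "'a::field falg set"
  assumes S: "finite S"
    and reduces: "\<And>w. length w \<le> n \<Longrightarrow> reduces_to (ideal_gen R) S (fa_word w)"
  shows "growth (ideal_gen R) n \<le> card S"
  unfolding growth_def
proof (rule Max.boundedI[OF finite_indep_cards])
  have "indep_mod (ideal_gen R) {}"
    by (simp add: indep_mod_def)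
  then show "{card W |W. W \<subseteq> {w. length w \<le> n} \<and> indep_mod (ideal_gen R) W} \<noteq> {}"
    by blast
next
  fix k assume "k \<in> {card W |W. W \<subseteq> {w. length w \<le> n} \<and> indep_mod (ideal_gen R) W}"
  then obtain W where W: "k = card W" "W \<subseteq> {w. length w \<le> n}" "indep_mod (ideal_gen R) W"
    by blast
  have "finite W"
    using W(2) finite_words_up_to by (rule finite_subset)
  then show "k \<le> card S"
    using card_le_if_reduces_to[OF S _ W(3) reduces] W(1,2) by blast
qed

section \<open>Spanning by ordered words when \<open>deg f \<le> 1\<close>\<close>

definition pbw :: "nat \<Rightarrow> nat \<Rightarrow> nat \<Rightarrow> gen list" where
  "pbw a b c = replicate a X @ replicate b H @ replicate c Y"

definition pbw_words :: "nat \<Rightarrow> nat \<Rightarrow> gen list set" where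
  "pbw_words M m = {pbw a b c | a b c. M * a + b + M * c \<le> m}"

lemma pbw_Cons:
  "X # pbw a b c = pbw (Suc a) b c"
  "H # pbw 0 b c = pbw 0 (Suc b) c"
  "Y # pbw 0 0 c = pbw 0 0 (Suc c)"
  by (simp_all add: pbw_def)

lemma pbw_words_subset:
  assumes "M \<ge> 1"
  shows "pbw_words M m \<subseteq> (\<lambda>(a, b, c). pbw a b c) ` ({..m} \<times> {..m} \<times> {..m})"
proof
  fix w assume "w \<in> pbw_words M m"
  then obtain a b c where w: "w = pbw a b c" "M * a + b + M * c \<le> m"
    unfolding pbw_words_def by blast
  have "a \<le> M * a" "c \<le> M * c"
    using assms by simp_all
  then have "a \<le> m" "b \<le> m" "c \<le> m"
    using w(2) by linarith+
  then have "(a, b, c) \<in> {..m} \<times> {..m} \<times> {..m}"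
    by simp
  then show "w \<in> (\<lambda>(a, b, c). pbw a b c) ` ({..m} \<times> {..m} \<times> {..m})"
    unfolding w(1) by (rule rev_image_eqI) simp
qed

lemma finite_pbw_words: "M \<ge> 1 \<Longrightarrow> finite (pbw_words M m)"
  by (rule finite_subset[OF pbw_words_subset]) auto

lemma card_pbw_words_le:
  assumes "M \<ge> 1"
  shows "card (pbw_words M m) \<le> (m + 1) ^ 3"
proof -
  have "card (pbw_words M m) \<le> card ((\<lambda>(a, b, c). pbw a b c) ` ({..m} \<times> {..m} \<times> {..m}))"
    by (rule card_mono[OF _ pbw_words_subset[OF assms]]) simp
  also have "\<dots> \<le> card ({..m} \<times> {..m} \<times> {..m})"
    by (rule card_image_le) simp
  also have "\<dots> = (m + 1) ^ 3"
    by (simp add: card_cartesian_product power3_eq_cube)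
  finally show ?thesis .
qed

definition xy_weight :: "'a::zero poly \<Rightarrow> nat" where
  "xy_weight g = max 1 (degree g)"

context
  fixes q :: "'a::field" and f g :: "'a poly"
begin

abbreviation Hq_ideal :: "'a falg set" where
  "Hq_ideal \<equiv> ideal_gen (Hq_rels q f g)"

lemma Hq_rel_times_word:
  assumes "r \<in> Hq_rels q f g"
  shows "fa_mult r (fa_word v) \<in> Hq_ideal"
  using assms by (intro ideal_gen.rmult ideal_gen.rel)

lemma HX_rel:
  assumes "degree f \<le> N"
  shows "fa_word (H # X # v) - (\<Sum>k\<le>N. fa_smult (coeff f k) (fa_word (X # replicate k H @ v))) \<in> Hq_ideal"
  using Hq_rel_times_word[of "fa_word [H, X] - fa_mult (fa_word [X]) (fa_poly_h f)" v]
  by (simp add: Hq_rels_def fa_mult_diff_left fa_poly_h_eq_sum[OF assms] fa_mult_sum_left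
      fa_mult_sum_right fa_mult_smult_left fa_mult_smult_right)

lemma YH_rel:
  assumes "degree f \<le> N"
  shows "fa_word (Y # H # v) - (\<Sum>k\<le>N. fa_smult (coeff f k) (fa_word (replicate k H @ Y # v))) \<in> Hq_ideal"
  using Hq_rel_times_word[of "fa_word [Y, H] - fa_mult (fa_poly_h f) (fa_word [Y])" v]
  by (simp add: Hq_rels_def fa_mult_diff_left fa_poly_h_eq_sum[OF assms] fa_mult_sum_left
      fa_mult_smult_left)

lemma YX_rel:
  assumes "degree g \<le> N"
  shows "fa_word (Y # X # v) - (fa_smult q (fa_word (X # Y # v))
           + (\<Sum>k\<le>N. fa_smult (coeff g k) (fa_word (replicate k H @ v)))) \<in> Hq_ideal"
  using Hq_rel_times_word[of "fa_word [Y, X] - fa_smult q (fa_word [X, Y]) - fa_poly_h g" v]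
  by (simp add: Hq_rels_def fa_mult_diff_left fa_poly_h_eq_sum[OF assms] fa_mult_sum_left
      fa_mult_smult_left fa_mult_add_left diff_diff_eq)

end

context
  fixes q :: "'a::field" and f g :: "'a poly"
begin

abbreviation pbw_reduces :: "nat \<Rightarrow> 'a falg \<Rightarrow> bool" where
  "pbw_reduces m p \<equiv> reduces_to (Hq_ideal q f g) (pbw_words (xy_weight g) m) p"

lemma pbw_reduces_pbw:
  "xy_weight g * a + b + xy_weight g * c \<le> m \<Longrightarrow> pbw_reduces m (fa_word (pbw a b c))"
  by (intro reduces_to_word) (auto simp: pbw_words_def)

lemma pbw_reduces_mono: "pbw_reduces m p \<Longrightarrow> m \<le> m' \<Longrightarrow> pbw_reduces m' p"
  by (erule reduces_to_mono) (fastforce simp: pbw_words_def)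

lemma pbw_reduces_X_mult:
  assumes "pbw_reduces m p"
  shows "pbw_reduces (m + xy_weight g) (fa_mult (fa_word [X]) p)"
proof (rule reduces_to_mult_word[OF assms])
  fix t assume "t \<in> pbw_words (xy_weight g) m"
  then obtain a b c where t: "t = pbw a b c" "xy_weight g * a + b + xy_weight g * c \<le> m"
    unfolding pbw_words_def by blast
  then show "pbw_reduces (m + xy_weight g) (fa_word ([X] @ t))"
    using pbw_reduces_pbw[of "Suc a" b c] by (simp add: pbw_Cons)
qed

context
  assumes deg_f: "degree f \<le> 1"
begin

lemma pbw_reduces_H_pbw:
  "pbw_reduces (xy_weight g * a + b + xy_weight g * c + 1) (fa_word (H # pbw a b c))"
proof (induction a)
  case 0
  then show ?case
    using pbw_reduces_pbw[of 0 "Suc b" c] by (simp add: pbw_Cons)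
next
  case (Suc a)
  let ?m = "xy_weight g * Suc a + b + xy_weight g * c + 1"
  have "pbw_reduces ?m (fa_word (X # replicate k H @ pbw a b c))" if "k \<in> {..1}" for k
  proof (cases k)
    case 0
    then show ?thesis
      using pbw_reduces_pbw[of "Suc a" b c] by (simp add: pbw_Cons)
  next
    case (Suc k')
    then have "k = 1" using that by simp
    then show ?thesis
      using pbw_reduces_X_mult[OF Suc.IH] by (simp add: algebra_simps)
  qed
  then have "pbw_reduces ?m (\<Sum>k\<le>1. fa_smult (coeff f k) (fa_word (X # replicate k H @ pbw a b c)))"
    by (rule reduces_to_lincomb)
  then have "pbw_reduces ?m (fa_word (H # X # pbw a b c))"
    by (rule reduces_to_congruent[OF HX_rel[OF deg_f]])
  then show ?case
    by (simp add: pbw_Cons)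
qed

lemma pbw_reduces_H_mult:
  assumes "pbw_reduces m p"
  shows "pbw_reduces (m + 1) (fa_mult (fa_word [H]) p)"
proof (rule reduces_to_mult_word[OF assms])
  fix t assume "t \<in> pbw_words (xy_weight g) m"
  then obtain a b c where t: "t = pbw a b c" "xy_weight g * a + b + xy_weight g * c \<le> m"
    unfolding pbw_words_def by blast
  then show "pbw_reduces (m + 1) (fa_word ([H] @ t))"
    using pbw_reduces_mono[OF pbw_reduces_H_pbw] by simp
qed

lemma pbw_reduces_H_pow:
  "pbw_reduces m (fa_word t) \<Longrightarrow> pbw_reduces (m + k) (fa_word (replicate k H @ t))"
proof (induction k)
  case (Suc k)
  then show ?case
    using pbw_reduces_H_mult[OF Suc.IH[OF Suc.prems]] by simp
qed simp

lemma pbw_reduces_Y_H_pbw: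
  "pbw_reduces (b + xy_weight g * c + xy_weight g) (fa_word (Y # pbw 0 b c))"
proof (induction b)
  case 0
  have "xy_weight g \<ge> 1"
    by (simp add: xy_weight_def)
  then show ?case
    using pbw_reduces_pbw[of 0 0 "Suc c"] by (simp add: pbw_Cons)
next
  case (Suc b)
  let ?m = "Suc b + xy_weight g * c + xy_weight g"
  have "pbw_reduces ?m (fa_word (replicate k H @ Y # pbw 0 b c))" if "k \<in> {..1}" for k
    using pbw_reduces_mono[OF pbw_reduces_H_pow[OF Suc.IH, of k]] that by simp
  then have "pbw_reduces ?m (\<Sum>k\<le>1. fa_smult (coeff f k) (fa_word (replicate k H @ Y # pbw 0 b c)))"
    by (rule reduces_to_lincomb)
  then have "pbw_reduces ?m (fa_word (Y # H # pbw 0 b c))"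
    by (rule reduces_to_congruent[OF YH_rel[OF deg_f]])
  then show ?case
    by (simp add: pbw_Cons)
qed

lemma pbw_reduces_Y_pbw:
  "pbw_reduces (xy_weight g * a + b + xy_weight g * c + xy_weight g) (fa_word (Y # pbw a b c))"
proof (induction a)
  case 0
  then show ?case
    using pbw_reduces_Y_H_pbw by simp
next
  case (Suc a)
  let ?m = "xy_weight g * Suc a + b + xy_weight g * c + xy_weight g"
  have XY: "pbw_reduces ?m (fa_word (X # Y # pbw a b c))"
    using pbw_reduces_X_mult[OF Suc.IH] by (simp add: algebra_simps)
  have "pbw_reduces ?m (fa_word (replicate k H @ pbw a b c))" if "k \<in> {..degree g}" for k
  proof -
    have "k \<le> xy_weight g"
      using that by (simp add: xy_weight_def)
    have "pbw_reduces (xy_weight g * a + b + xy_weight g * c + k) (fa_word (replicate k H @ pbw a b c))"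
      by (rule pbw_reduces_H_pow[OF pbw_reduces_pbw[OF order.refl]])
    then show ?thesis
      by (rule pbw_reduces_mono) (use \<open>k \<le> xy_weight g\<close> in simp)
  qed
  then have "pbw_reduces ?m (\<Sum>k\<le>degree g. fa_smult (coeff g k) (fa_word (replicate k H @ pbw a b c)))"
    by (rule reduces_to_lincomb)
  with XY have "fa_smult q (fa_word (X # Y # pbw a b c))
      + (\<Sum>k\<le>degree g. fa_smult (coeff g k) (fa_word (replicate k H @ pbw a b c)))
      \<in> {p. pbw_reduces ?m p}"
    by (intro falg.subspace_add[OF falg_subspace_reduces_to] falg.subspace_scale[OF falg_subspace_reduces_to])
      simp_all
  then have "pbw_reduces ?m (fa_word (Y # X # pbw a b c))"
    by (intro reduces_to_congruent[OF YX_rel[OF order.refl]]) simp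
  then show ?case
    by (simp add: pbw_Cons)
qed

lemma pbw_reduces_Y_mult:
  assumes "pbw_reduces m p"
  shows "pbw_reduces (m + xy_weight g) (fa_mult (fa_word [Y]) p)"
proof (rule reduces_to_mult_word[OF assms])
  fix t assume "t \<in> pbw_words (xy_weight g) m"
  then obtain a b c where t: "t = pbw a b c" "xy_weight g * a + b + xy_weight g * c \<le> m"
    unfolding pbw_words_def by blast
  then show "pbw_reduces (m + xy_weight g) (fa_word ([Y] @ t))"
    using pbw_reduces_mono[OF pbw_reduces_Y_pbw] by simp
qed

lemma pbw_reduces_word: "pbw_reduces (xy_weight g * length w) (fa_word w)"
proof (induction w)
  case Nil
  then show ?case
    using pbw_reduces_pbw[of 0 0 0] by (simp add: pbw_def)
next
  case (Cons z w)
  have "xy_weight g \<ge> 1"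
    by (simp add: xy_weight_def)
  then show ?case
    using pbw_reduces_X_mult[OF Cons] pbw_reduces_Y_mult[OF Cons]
      pbw_reduces_mono[OF pbw_reduces_H_mult[OF Cons]]
    by (cases z) (simp_all add: add.commute)
qed

lemma growth_Hq_le: "growth (Hq_ideal q f g) n \<le> (xy_weight g * n + 1) ^ 3"
proof -
  have "growth (Hq_ideal q f g) n \<le> card (pbw_words (xy_weight g) (xy_weight g * n))"
  proof (rule growth_le_card_if_reduces_to)
    show "finite (pbw_words (xy_weight g) (xy_weight g * n))"
      by (rule finite_pbw_words) (simp add: xy_weight_def)
    show "pbw_reduces (xy_weight g * n) (fa_word w)" if "length w \<le> n" for w
      using pbw_reduces_mono[OF pbw_reduces_word] that by simp
  qed
  also have "\<dots> \<le> (xy_weight g * n + 1) ^ 3"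
    by (rule card_pbw_words_le) (simp add: xy_weight_def)
  finally show ?thesis .
qed

end

end

section \<open>The regular representation in the ordered basis\<close>

definition pcompose_iter :: "'a::comm_ring_1 poly \<Rightarrow> nat \<Rightarrow> 'a poly" where
  "pcompose_iter f a = (pcompose f ^^ a) [:0, 1:]"

lemma pcompose_iter_0 [simp]: "pcompose_iter f 0 = [:0, 1:]"
  by (simp add: pcompose_iter_def)

lemma pcompose_iter_Suc: "pcompose_iter f (Suc a) = pcompose f (pcompose_iter f a)"
  by (simp add: pcompose_iter_def)

lemma pcompose_iter_Suc': "pcompose_iter f (Suc a) = pcompose (pcompose_iter f a) f"
proof (induction a)
  case 0
  then show ?case
    by (simp add: pcompose_iter_Suc pcompose_pCons)
next
  case (Suc a)
  then show ?case
    by (simp add: pcompose_iter_Suc pcompose_assoc)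
qed

lemma degree_pcompose_iter: "degree (pcompose_iter f a) = degree f ^ a"
  for f :: "'a::idom poly"
  by (induction a) (simp_all add: pcompose_iter_Suc degree_pcompose)

lemma pcompose_eq_sum:
  fixes p :: "'a::comm_ring_1 poly"
  assumes "degree p \<le> N"
  shows "pcompose p r = (\<Sum>k\<le>N. smult (coeff p k) (r ^ k))"
proof -
  have deg: "degree (map_poly (\<lambda>x. [:x:]) p) = degree p"
    by (rule degree_map_poly) simp
  have "pcompose p r = (\<Sum>k\<le>degree p. smult (coeff p k) (r ^ k))"
    unfolding pcompose_altdef poly_altdef deg by (simp add: coeff_map_poly)
  also have "\<dots> = (\<Sum>k\<le>N. smult (coeff p k) (r ^ k))"
    using assms by (intro sum.mono_neutral_left) (auto simp: coeff_eq_0)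
  finally show ?thesis .
qed

text \<open>A vector \<open>v\<close> stands for \<open>\<Sum> x^a (v a c)(h) y^c\<close>.  The operators below are left multiplication
  by \<open>x\<close>, \<open>h\<close> and \<open>y\<close> in this basis, computed from \<open>h x^a = x^a f_a(h)\<close> with
  \<open>f_a = pcompose_iter f a\<close>, \<open>y p(h) = p(f(h)) y\<close> and
  \<open>y x^(a+1) = q^(a+1) x^(a+1) y + x^a G_(a+1)(h)\<close> with \<open>G_a = yx_correction q f g a\<close>.\<close>

type_synonym 'a pbw_vec = "nat \<Rightarrow> nat \<Rightarrow> 'a poly"

definition vec_smult :: "'a::comm_ring_1 \<Rightarrow> 'a pbw_vec \<Rightarrow> 'a pbw_vec" where
  "vec_smult k v = (\<lambda>a c. smult k (v a c))"

lemma vec_smult_apply: "vec_smult k v a c = smult k (v a c)"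
  by (simp add: vec_smult_def)

interpretation pvec: module "vec_smult :: 'a::comm_ring_1 \<Rightarrow> 'a pbw_vec \<Rightarrow> 'a pbw_vec"
  by unfold_locales (auto simp: vec_smult_def smult_add_right smult_add_left fun_eq_iff)

primrec yx_correction :: "'a::comm_ring_1 \<Rightarrow> 'a poly \<Rightarrow> 'a poly \<Rightarrow> nat \<Rightarrow> 'a poly" where
  "yx_correction q f g 0 = 0"
| "yx_correction q f g (Suc a) = pcompose g (pcompose_iter f a) + smult q (yx_correction q f g a)"

context
  fixes q :: "'a::comm_ring_1" and f g :: "'a poly"
begin

definition act_X :: "'a pbw_vec \<Rightarrow> 'a pbw_vec" where
  "act_X v = (\<lambda>a c. if a = 0 then 0 else v (a - 1) c)"

definition act_H :: "'a pbw_vec \<Rightarrow> 'a pbw_vec" where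
  "act_H v = (\<lambda>a c. pcompose_iter f a * v a c)"

definition act_Y :: "'a pbw_vec \<Rightarrow> 'a pbw_vec" where
  "act_Y v = (\<lambda>a c. smult (q ^ a) (if c = 0 then 0 else pcompose (v a (c - 1)) f)
                    + yx_correction q f g (Suc a) * v (Suc a) c)"

definition act_gen :: "gen \<Rightarrow> 'a pbw_vec \<Rightarrow> 'a pbw_vec" where
  "act_gen z = (case z of X \<Rightarrow> act_X | H \<Rightarrow> act_H | Y \<Rightarrow> act_Y)"

primrec act_word :: "gen list \<Rightarrow> 'a pbw_vec \<Rightarrow> 'a pbw_vec" where
  "act_word [] v = v"
| "act_word (z # w) v = act_gen z (act_word w v)"

text \<open>Only meaningful for finitely supported \<open>p\<close>; elements of \<^const>\<open>ideal_gen\<close> are.\<close>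

definition act :: "'a falg \<Rightarrow> 'a pbw_vec \<Rightarrow> 'a pbw_vec" where
  "act p v = (\<Sum>w\<in>supp p. vec_smult (p w) (act_word w v))"

lemma act_word_append: "act_word (u @ w) v = act_word u (act_word w v)"
  by (induction u) auto

lemma module_hom_act_gen: "module_hom vec_smult vec_smult (act_gen z)"
proof -
  have "module_hom vec_smult vec_smult act_X"
    by unfold_locales (auto simp: act_X_def vec_smult_apply fun_eq_iff)
  moreover have "module_hom vec_smult vec_smult act_H"
    by unfold_locales (auto simp: act_H_def vec_smult_apply fun_eq_iff algebra_simps)
  moreover have "module_hom vec_smult vec_smult act_Y"
    by unfold_locales
      (auto simp: act_Y_def vec_smult_apply fun_eq_iff algebra_simps pcompose_add pcompose_smult
        smult_add_right)
  ultimately show ?thesis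
    by (cases z) (simp_all add: act_gen_def)
qed

lemma module_hom_act_word: "module_hom vec_smult vec_smult (act_word w)"
proof (induction w)
  case Nil
  have "act_word [] = (\<lambda>v. v)"
    by (rule ext) simp
  then show ?case
    using pvec.module_hom_ident by (simp only:)
next
  case (Cons z w)
  have "act_word (z # w) = act_gen z \<circ> act_word w"
    by auto
  then show ?case
    using module_hom_compose[OF Cons module_hom_act_gen] by (simp only:)
qed

lemma act_eq_sum_over:
  assumes "finite T" and "supp p \<subseteq> T"
  shows "act p v = (\<Sum>w\<in>T. vec_smult (p w) (act_word w v))"
  unfolding act_def using assms by (intro sum.mono_neutral_left) (auto simp: supp_def)

lemma act_add:
  assumes "finite (supp p)" and "finite (supp r)"
  shows "act (p + r) v = act p v + act r v"
proof -
  let ?T = "supp p \<union> supp r"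
  have "act (p + r) v = (\<Sum>w\<in>?T. vec_smult ((p + r) w) (act_word w v))"
    using assms by (intro act_eq_sum_over) (auto simp: supp_def)
  also have "\<dots> = (\<Sum>w\<in>?T. vec_smult (p w) (act_word w v)) + (\<Sum>w\<in>?T. vec_smult (r w) (act_word w v))"
    by (simp add: pvec.scale_left_distrib sum.distrib)
  also have "\<dots> = act p v + act r v"
    using assms by (simp add: act_eq_sum_over[of ?T])
  finally show ?thesis .
qed

lemma act_diff:
  assumes "finite (supp p)" and "finite (supp r)"
  shows "act (p - r) v = act p v - act r v"
proof -
  let ?T = "supp p \<union> supp r"
  have "act (p - r) v = (\<Sum>w\<in>?T. vec_smult ((p - r) w) (act_word w v))"
    using assms by (intro act_eq_sum_over) (auto simp: supp_def)
  also have "\<dots> = (\<Sum>w\<in>?T. vec_smult (p w) (act_word w v)) - (\<Sum>w\<in>?T. vec_smult (r w) (act_word w v))"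
    by (simp add: pvec.scale_left_diff_distrib sum_subtractf)
  also have "\<dots> = act p v - act r v"
    using assms by (simp add: act_eq_sum_over[of ?T])
  finally show ?thesis .
qed

lemma act_smult:
  assumes "finite (supp p)"
  shows "act (fa_smult k p) v = vec_smult k (act p v)"
proof -
  have "act (fa_smult k p) v = (\<Sum>w\<in>supp p. vec_smult (fa_smult k p w) (act_word w v))"
    using assms by (intro act_eq_sum_over) (auto simp: supp_def fa_smult_apply)
  then show ?thesis
    by (simp add: act_def pvec.scale_sum_right fa_smult_apply)
qed

lemma act_fa_word: "act (fa_word u) v = act_word u v"
  unfolding act_def supp_fa_word by (simp add: fa_word_def)

lemma act_mult_word_left:
  assumes "finite (supp p)"
  shows "act (fa_mult (fa_word u) p) v = act_word u (act p v)"
proof -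
  interpret word: module_hom vec_smult vec_smult "act_word u"
    by (rule module_hom_act_word)
  have "act (fa_mult (fa_word u) p) v =
      (\<Sum>w\<in>(\<lambda>t. u @ t) ` supp p. vec_smult (fa_mult (fa_word u) p w) (act_word w v))"
    using assms supp_mult_word_left by (intro act_eq_sum_over) auto
  also have "\<dots> = (\<Sum>t\<in>supp p. vec_smult (p t) (act_word u (act_word t v)))"
    by (simp add: sum.reindex inj_on_def fa_mult_word_left act_word_append)
  also have "\<dots> = act_word u (act p v)"
    by (simp add: act_def word.sum word.scale)
  finally show ?thesis .
qed

lemma act_mult_word_right:
  assumes "finite (supp p)"
  shows "act (fa_mult p (fa_word u)) v = act p (act_word u v)"
proof -
  have "act (fa_mult p (fa_word u)) v =
      (\<Sum>w\<in>(\<lambda>t. t @ u) ` supp p. vec_smult (fa_mult p (fa_word u) w) (act_word w v))"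
    using assms supp_mult_word_right by (intro act_eq_sum_over) auto
  also have "\<dots> = act p (act_word u v)"
    by (simp add: sum.reindex inj_on_def fa_mult_word_right act_word_append act_def)
  finally show ?thesis .
qed

lemma act_word_H_pow: "act_word (replicate k H) v = (\<lambda>a c. pcompose_iter f a ^ k * v a c)"
  by (induction k) (auto simp: act_gen_def act_H_def mult.assoc)

lemma act_fa_poly_h: "act (fa_poly_h p) v = (\<lambda>a c. pcompose p (pcompose_iter f a) * v a c)"
proof -
  have "act (fa_poly_h p) v =
      (\<Sum>w\<in>(\<lambda>k. replicate k H) ` {..degree p}. vec_smult (fa_poly_h p w) (act_word w v))"
    using supp_fa_poly_h by (intro act_eq_sum_over) auto
  also have "\<dots> = (\<Sum>k\<le>degree p. vec_smult (coeff p k) (act_word (replicate k H) v))"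
    by (simp add: sum.reindex inj_on_def fa_poly_h_def)
  also have "\<dots> = (\<lambda>a c. pcompose p (pcompose_iter f a) * v a c)"
    by (simp add: act_word_H_pow pcompose_eq_sum[OF order.refl] sum_fun_apply vec_smult_apply
        sum_distrib_right fun_eq_iff)
  finally show ?thesis .
qed

lemma act_ideal_gen_eq_0:
  assumes rels: "\<And>r. r \<in> R \<Longrightarrow> finite (supp r) \<and> (\<forall>v. act r v = 0)"
    and "p \<in> ideal_gen R"
  shows "finite (supp p) \<and> (\<forall>v. act p v = 0)"
  using assms(2)
proof (induction p rule: ideal_gen.induct)
  case (rel r)
  then show ?case
    by (rule rels)
next
  case zero
  have "supp (\<lambda>_. 0 :: 'a) = {}"
    by (simp add: supp_def)
  then show ?case
    by (simp add: act_def)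
next
  case (add p r)
  then show ?case
    by (simp add: finite_supp_add act_add del: plus_fun_apply zero_fun_apply)
next
  case (smult p k)
  then show ?case
    by (simp add: finite_supp_smult act_smult pvec.scale_zero_right del: zero_fun_apply)
next
  case (lmult p u)
  interpret word: module_hom vec_smult vec_smult "act_word u"
    by (rule module_hom_act_word)
  from lmult show ?case
    by (simp add: finite_supp_mult_word_left act_mult_word_left del: zero_fun_apply)
next
  case (rmult p u)
  then show ?case
    by (simp add: finite_supp_mult_word_right act_mult_word_right del: zero_fun_apply)
qed
end

context
  fixes q :: "'a::field" and f g :: "'a poly"
begin

lemma act_HX_rel: "act q f g (fa_word [H, X] - fa_mult (fa_word [X]) (fa_poly_h f)) v = 0"
proof -
  have "act q f g (fa_word [H, X] - fa_mult (fa_word [X]) (fa_poly_h f)) v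
      = act_H f (act_X v) - act_X (\<lambda>a c. pcompose f (pcompose_iter f a) * v a c)"
    by (simp add: act_diff act_fa_word act_mult_word_left finite_supp_fa_word finite_supp_fa_poly_h
        finite_supp_mult_word_left act_fa_poly_h act_gen_def)
  also have "\<dots> = 0"
  proof (rule ext, rule ext)
    fix a c
    show "(act_H f (act_X v) - act_X (\<lambda>a c. pcompose f (pcompose_iter f a) * v a c)) a c = 0 a c"
      by (cases a) (simp_all add: act_X_def act_H_def pcompose_iter_Suc)
  qed
  finally show ?thesis .
qed

lemma act_YH_rel: "act q f g (fa_word [Y, H] - fa_mult (fa_poly_h f) (fa_word [Y])) v = 0"
proof -
  have "act q f g (fa_word [Y, H] - fa_mult (fa_poly_h f) (fa_word [Y])) v
      = act_Y q f g (act_H f v) - (\<lambda>a c. pcompose f (pcompose_iter f a) * act_Y q f g v a c)"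
    by (simp add: act_diff act_fa_word act_mult_word_right finite_supp_fa_word finite_supp_fa_poly_h
        finite_supp_mult_word_right act_fa_poly_h act_gen_def)
  also have "\<dots> = 0"
  proof (rule ext, rule ext)
    fix a c
    show "(act_Y q f g (act_H f v) - (\<lambda>a c. pcompose f (pcompose_iter f a) * act_Y q f g v a c)) a c
        = 0 a c"
      by (cases c) (simp_all add: act_Y_def act_H_def pcompose_mult pcompose_iter_Suc[symmetric]
          pcompose_iter_Suc'[symmetric] algebra_simps)
  qed
  finally show ?thesis .
qed

lemma act_YX_rel: "act q f g (fa_word [Y, X] - fa_smult q (fa_word [X, Y]) - fa_poly_h g) v = 0"
proof -
  have "act q f g (fa_word [Y, X] - fa_smult q (fa_word [X, Y]) - fa_poly_h g) v
      = act_Y q f g (act_X v) - vec_smult q (act_X (act_Y q f g v))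
        - (\<lambda>a c. pcompose g (pcompose_iter f a) * v a c)"
    by (simp add: act_diff act_smult act_fa_word finite_supp_fa_word finite_supp_fa_poly_h
        finite_supp_diff finite_supp_smult act_fa_poly_h act_gen_def)
  also have "\<dots> = 0"
  proof (rule ext, rule ext)
    fix a c
    show "(act_Y q f g (act_X v) - vec_smult q (act_X (act_Y q f g v))
        - (\<lambda>a c. pcompose g (pcompose_iter f a) * v a c)) a c = 0 a c"
      by (cases a) (simp_all add: act_Y_def act_X_def vec_smult_apply smult_add_right algebra_simps)
  qed
  finally show ?thesis .
qed

lemma act_Hq_rels_eq_0:
  assumes "r \<in> Hq_rels q f g"
  shows "finite (supp r) \<and> (\<forall>v. act q f g r v = 0)"
  using assms act_HX_rel act_YH_rel act_YX_rel
  by (auto simp: Hq_rels_def finite_supp_diff finite_supp_smult finite_supp_fa_word finite_supp_fa_poly_h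
      finite_supp_mult_word_left finite_supp_mult_word_right)

lemma act_Hq_ideal_eq_0:
  assumes "p \<in> Hq_ideal q f g"
  shows "act q f g p v = 0"
  using act_ideal_gen_eq_0[OF act_Hq_rels_eq_0 assms] by blast

end

section \<open>Lower bounds for the growth\<close>

definition single_vec :: "nat \<Rightarrow> 'a::zero poly \<Rightarrow> nat \<Rightarrow> 'a pbw_vec" where
  "single_vec a p c = (\<lambda>a' c'. if a' = a \<and> c' = c then p else 0)"

lemma single_vec_eq_iff:
  "p \<noteq> 0 \<Longrightarrow> single_vec a p c = single_vec a' p' c' \<longleftrightarrow> a = a' \<and> p = p' \<and> c = c'"
  unfolding single_vec_def by (metis (full_types))

lemma sum_smult_distinct_degrees_eq_0_imp:
  fixes P :: "'j \<Rightarrow> 'a::idom poly"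
  assumes T: "finite T" and nz: "\<And>j. j \<in> T \<Longrightarrow> P j \<noteq> 0"
    and inj: "inj_on (\<lambda>j. degree (P j)) T"
    and sum_eq_0: "(\<Sum>j\<in>T. smult (u j) (P j)) = 0"
  shows "\<forall>j\<in>T. u j = 0"
proof (rule ccontr)
  let ?T' = "{j \<in> T. u j \<noteq> 0}"
  assume "\<not> (\<forall>j\<in>T. u j = 0)"
  then have T': "finite ?T'" "?T' \<noteq> {}"
    using T by auto
  define D where "D = Max ((\<lambda>j. degree (P j)) ` ?T')"
  have "D \<in> (\<lambda>j. degree (P j)) ` ?T'"
    unfolding D_def using T' by (intro Max_in) auto
  then obtain j1 where j1: "j1 \<in> T" "u j1 \<noteq> 0" "degree (P j1) = D"
    by blast
  have le_D: "degree (P j) \<le> D" if "j \<in> T" "u j \<noteq> 0" for j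
    unfolding D_def using T' that by (intro Max_ge) auto
  have coeff_D: "coeff (smult (u j) (P j)) D = (if j = j1 then u j1 * lead_coeff (P j1) else 0)"
    if "j \<in> T" for j
  proof (cases "j = j1 \<or> u j = 0")
    case True
    then show ?thesis
      using j1 by auto
  next
    case False
    then have "degree (P j) \<noteq> D"
      using inj j1 that by (auto simp: inj_on_def)
    then have "degree (P j) < D"
      using le_D[OF that] False by simp
    then show ?thesis
      using False by (simp add: coeff_eq_0)
  qed
  have "coeff (\<Sum>j\<in>T. smult (u j) (P j)) D = (\<Sum>j\<in>T. if j = j1 then u j1 * lead_coeff (P j1) else 0)"
    unfolding coeff_sum using coeff_D by (rule sum.cong[OF refl])
  also have "\<dots> = u j1 * lead_coeff (P j1)"
    using T j1(1) by simp
  finally have "u j1 * lead_coeff (P j1) = 0"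
    using sum_eq_0 by simp
  moreover have "lead_coeff (P j1) \<noteq> 0"
    using nz j1(1) by simp
  ultimately show False
    using j1(2) by simp
qed

lemma sum_single_vecs_eq_0_imp:
  fixes u :: "'j \<Rightarrow> 'a::idom"
  assumes J: "finite J" and nz: "\<And>j. j \<in> J \<Longrightarrow> P j \<noteq> 0"
    and inj: "inj_on (\<lambda>j. (A j, degree (P j), C j)) J"
    and sum_eq_0: "(\<Sum>j\<in>J. vec_smult (u j) (single_vec (A j) (P j) (C j))) = 0"
  shows "\<forall>j\<in>J. u j = 0"
proof
  fix j0 assume j0: "j0 \<in> J"
  let ?T = "{j \<in> J. A j0 = A j \<and> C j0 = C j}"
  have "(\<Sum>j\<in>?T. smult (u j) (P j))
      = (\<Sum>j\<in>J. vec_smult (u j) (single_vec (A j) (P j) (C j))) (A j0) (C j0)"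
    using J by (simp add: sum.inter_filter sum_fun_apply vec_smult_apply single_vec_def if_distrib
        cong: if_cong)
  also have "\<dots> = 0"
    unfolding sum_eq_0 by simp
  finally have "\<forall>j\<in>?T. u j = 0"
    using J nz inj by (intro sum_smult_distinct_degrees_eq_0_imp) (auto simp: inj_on_def)
  then show "u j0 = 0"
    using j0 by simp
qed

lemma indep_mod_Hq_if_act_single:
  fixes q :: "'a::field" and f g :: "'a poly" and wd :: "'j \<Rightarrow> gen list"
  assumes J: "finite J"
    and act_wd: "\<And>j. j \<in> J \<Longrightarrow> act_word q f g (wd j) (single_vec 0 1 0) = single_vec (A j) (P j) (C j)"
    and nz: "\<And>j. j \<in> J \<Longrightarrow> P j \<noteq> 0"
    and inj: "inj_on (\<lambda>j. (A j, degree (P j), C j)) J"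
  shows "inj_on wd J \<and> indep_mod (Hq_ideal q f g) (wd ` J)"
proof
  show inj_wd: "inj_on wd J"
  proof (rule inj_onI)
    fix j j' assume j: "j \<in> J" "j' \<in> J" "wd j = wd j'"
    then have "single_vec (A j) (P j) (C j) = single_vec (A j') (P j') (C j')"
      using act_wd by metis
    then have "(A j, degree (P j), C j) = (A j', degree (P j'), C j')"
      using single_vec_eq_iff[OF nz[OF j(1)]] by simp
    then show "j = j'"
      using j(1,2) by (intro inj_onD[OF inj]) simp_all
  qed
  show "indep_mod (Hq_ideal q f g) (wd ` J)"
    unfolding indep_mod_def
  proof (intro allI impI ballI)
    fix cf :: "'a falg" and w
    assume out: "\<forall>w. w \<notin> wd ` J \<longrightarrow> cf w = 0" and cf: "cf \<in> Hq_ideal q f g" and w: "w \<in> wd ` J"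
    have "supp cf \<subseteq> wd ` J"
      using out by (auto simp: supp_def)
    then have "act q f g cf (single_vec 0 1 0) =
        (\<Sum>w\<in>wd ` J. vec_smult (cf w) (act_word q f g w (single_vec 0 1 0)))"
      using J by (intro act_eq_sum_over) simp_all
    also have "\<dots> = (\<Sum>j\<in>J. vec_smult (cf (wd j)) (single_vec (A j) (P j) (C j)))"
      unfolding sum.reindex[OF inj_wd] by (intro sum.cong) (simp_all add: act_wd)
    finally have "\<forall>j\<in>J. cf (wd j) = 0"
      using act_Hq_ideal_eq_0[OF cf] sum_single_vecs_eq_0_imp[OF J nz inj] by simp
    then show "cf w = 0"
      using w by blast
  qed
qed

lemma card_le_growth_Hq_if_act_single:
  fixes q :: "'a::field" and f g :: "'a poly" and wd :: "'j \<Rightarrow> gen list"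
  assumes "finite J"
    and "\<And>j. j \<in> J \<Longrightarrow> act_word q f g (wd j) (single_vec 0 1 0) = single_vec (A j) (P j) (C j)"
    and "\<And>j. j \<in> J \<Longrightarrow> P j \<noteq> 0"
    and "inj_on (\<lambda>j. (A j, degree (P j), C j)) J"
    and length_wd: "\<And>j. j \<in> J \<Longrightarrow> length (wd j) \<le> n"
  shows "card J \<le> growth (Hq_ideal q f g) n"
proof -
  have inj: "inj_on wd J" and indep: "indep_mod (Hq_ideal q f g) (wd ` J)"
    using indep_mod_Hq_if_act_single[OF assms(1-4)] by auto
  have "wd ` J \<subseteq> {w. length w \<le> n}"
    using length_wd by auto
  then have "card (wd ` J) \<le> growth (Hq_ideal q f g) n"
    using indep by (rule card_le_growth)
  then show ?thesis
    using card_image[OF inj] by simp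
qed

context
  fixes q :: "'a::comm_ring_1" and f g :: "'a poly"
begin

lemma act_word_X_pow_single:
  "act_word q f g (replicate k X) (single_vec a p c) = single_vec (a + k) p c"
  by (induction k) (auto simp: act_gen_def act_X_def single_vec_def fun_eq_iff)

lemma act_word_H_pow_single:
  "act_word q f g (replicate k H) (single_vec a p c) = single_vec a (pcompose_iter f a ^ k * p) c"
  by (auto simp: act_word_H_pow single_vec_def fun_eq_iff)

lemma act_word_Y_pow_single: "act_word q f g (replicate c Y) (single_vec 0 1 0) = single_vec 0 1 c"
  by (induction c) (auto simp: act_gen_def act_Y_def single_vec_def fun_eq_iff pcompose_1)

lemma act_word_pbw_single:
  "act_word q f g (pbw a b c) (single_vec 0 1 0) = single_vec a ([:0, 1:] ^ b) c"
  by (simp add: pbw_def act_word_append act_word_Y_pow_single act_word_H_pow_single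
      act_word_X_pow_single)

lemma act_word_two_X_blocks_single:
  "act_word q f g (replicate b1 H @ replicate m X @ replicate b2 H @ replicate m X @ replicate b3 H
      @ replicate c Y) (single_vec 0 1 0)
    = single_vec (m + m) (pcompose_iter f (m + m) ^ b1 * pcompose_iter f m ^ b2 * [:0, 1:] ^ b3) c"
  by (simp add: act_word_append act_word_Y_pow_single act_word_H_pow_single act_word_X_pow_single
      mult.assoc)

end

lemma growth_Hq_ge_cube:
  fixes q :: "'a::field" and f g :: "'a poly"
  shows "(n div 3) ^ 3 \<le> growth (Hq_ideal q f g) n"
proof -
  define k where "k = n div 3"
  have "card ({..<k} \<times> {..<k} \<times> {..<k}) \<le> growth (Hq_ideal q f g) n"
  proof (rule card_le_growth_Hq_if_act_single[where wd = "\<lambda>(a, b, c). pbw a b c"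
        and A = "\<lambda>(a, b, c). a" and P = "\<lambda>(a, b, c). [:0, 1:] ^ b" and C = "\<lambda>(a, b, c). c"])
    show "act_word q f g ((\<lambda>(a, b, c). pbw a b c) j) (single_vec 0 1 0) =
        single_vec ((\<lambda>(a, b, c). a) j) ((\<lambda>(a, b, c). [:0, 1:] ^ b) j) ((\<lambda>(a, b, c). c) j)" for j
      by (cases j) (simp add: act_word_pbw_single)
    show "inj_on (\<lambda>j. ((\<lambda>(a, b, c). a) j, degree ((\<lambda>(a, b, c). [:0, 1:] ^ b :: 'a poly) j),
        (\<lambda>(a, b, c). c) j)) ({..<k} \<times> {..<k} \<times> {..<k})"
      by (auto simp: inj_on_def degree_power_eq)
    show "length ((\<lambda>(a, b, c). pbw a b c) j) \<le> n" if "j \<in> {..<k} \<times> {..<k} \<times> {..<k}" for j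
      using that by (auto simp: pbw_def k_def)
  qed auto
  then show ?thesis
    by (simp add: k_def card_cartesian_product power3_eq_cube)
qed

lemma base_digits_eq:
  fixes B :: nat
  assumes "x2 < B" "x3 < B" "y2 < B" "y3 < B"
    and "(x1 * B + x2) * B + x3 = (y1 * B + y2) * B + y3"
  shows "x1 = y1 \<and> x2 = y2 \<and> x3 = y3"
proof -
  have "x3 = y3" and high: "x1 * B + x2 = y1 * B + y2"
    using arg_cong[OF assms(5), of "\<lambda>t. t mod B"] arg_cong[OF assms(5), of "\<lambda>t. t div B"] assms(1-4)
    by simp_all
  moreover have "x2 = y2" and "x1 = y1"
    using arg_cong[OF high, of "\<lambda>t. t mod B"] arg_cong[OF high, of "\<lambda>t. t div B"] assms(1-4)
    by simp_all
  ultimately show ?thesis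
    by blast
qed

lemma pcompose_iter_nonzero:
  fixes f :: "'a::idom poly"
  assumes "degree f \<ge> 1"
  shows "pcompose_iter f j \<noteq> 0"
proof -
  have "1 \<le> degree f ^ j"
    using assms by (rule one_le_power)
  then have "degree (pcompose_iter f j) \<noteq> 0"
    unfolding degree_pcompose_iter by linarith
  then show ?thesis
    by auto
qed

lemma growth_Hq_ge_fourth_power:
  fixes q :: "'a::field" and f g :: "'a poly"
  assumes deg_f: "degree f \<ge> 2"
  shows "(n div 6) ^ 4 \<le> growth (Hq_ideal q f g) n"
proof -
  define m where "m = n div 6"
  define B where "B = degree f ^ m"
  define J where "J = {..<m} \<times> {..<m} \<times> {..<m} \<times> {..<m}"
  define P where "P = (\<lambda>(b1, b2, b3, c :: nat).
      pcompose_iter f (m + m) ^ b1 * pcompose_iter f m ^ b2 * [:0, 1:] ^ b3)"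
  have "m < 2 ^ m"
    by (rule less_exp)
  also have "\<dots> \<le> B"
    unfolding B_def using deg_f by (rule power_mono) simp
  finally have m_B: "m < B" .
  have iter_nz: "pcompose_iter f j \<noteq> 0" for j
    using deg_f by (intro pcompose_iter_nonzero) simp
  have deg_P: "degree (P (b1, b2, b3, c)) = (b1 * B + b2) * B + b3" for b1 b2 b3 c
    using iter_nz by (simp add: P_def degree_mult_eq degree_power_eq degree_pcompose_iter B_def
        power_add algebra_simps)
  have "card J \<le> growth (Hq_ideal q f g) n"
  proof (rule card_le_growth_Hq_if_act_single[where A = "\<lambda>_. m + m" and P = P
        and C = "\<lambda>(b1, b2, b3, c). c" and wd = "\<lambda>(b1, b2, b3, c). replicate b1 H @ replicate m X
          @ replicate b2 H @ replicate m X @ replicate b3 H @ replicate c Y"])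
    show "inj_on (\<lambda>j. (m + m, degree (P j), (\<lambda>(b1, b2, b3, c). c) j)) J"
    proof (rule inj_onI)
      fix x y
      assume "x \<in> J" "y \<in> J" "(m + m, degree (P x), (\<lambda>(b1, b2, b3, c). c) x)
          = (m + m, degree (P y), (\<lambda>(b1, b2, b3, c). c) y)"
      moreover obtain x1 x2 x3 x4 y1 y2 y3 y4 where "x = (x1, x2, x3, x4)" "y = (y1, y2, y3, y4)"
        by (cases x, cases y) auto
      ultimately show "x = y"
        using base_digits_eq[of x2 B x3 y2 y3 x1 y1] m_B by (simp add: J_def deg_P)
    qed
  qed (use iter_nz in \<open>auto simp: J_def P_def m_def act_word_two_X_blocks_single\<close>)
  then show ?thesis
    by (simp add: J_def m_def card_cartesian_product power4_eq_xxxx)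
qed

lemma real_div_nat_ge:
  assumes "k > 0"
  shows "(real n - real k + 1) / real k \<le> real (n div k)"
proof -
  have "n mod k + 1 \<le> k"
    using assms by (simp add: Suc_le_eq)
  moreover have "n = k * (n div k) + n mod k"
    by simp
  ultimately have "real n + 1 \<le> real k * real (n div k) + real k"
    by (metis add.assoc add_le_cancel_left of_nat_1 of_nat_add of_nat_le_iff of_nat_mult)
  then show ?thesis
    using assms by (simp add: field_simps)
qed

lemma limsup_ln_ratio_ge:
  fixes G :: "nat \<Rightarrow> nat"
  assumes k: "k > 0" and G: "\<And>n. (n div k) ^ e \<le> G n"
  shows "ereal (real e) \<le> limsup (\<lambda>n. ereal (ln (real (G n)) / ln (real n)))"
proof -
  let ?l = "\<lambda>n. real e * ln ((real n - real k + 1) / real k) / ln (real n)"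
  have "(?l \<longlongrightarrow> real e) sequentially"
    using k by real_asymp
  then have "limsup (\<lambda>n. ereal (?l n)) = ereal (real e)"
    by (intro lim_imp_Limsup) (simp_all add: tendsto_ereal)
  moreover have "eventually (\<lambda>n. ?l n \<le> ln (real (G n)) / ln (real n)) sequentially"
    using eventually_ge_at_top[of "2 * k + 2"]
  proof eventually_elim
    case (elim n)
    let ?x = "(real n - real k + 1) / real k"
    have x_pos: "0 < ?x"
      using elim k by simp
    have "?x ^ e \<le> real (n div k) ^ e"
      using x_pos real_div_nat_ge[OF k] by (intro power_mono) simp_all
    also have "\<dots> \<le> real (G n)"
      using G[of n] by (metis of_nat_le_iff of_nat_power)
    finally have "?x ^ e \<le> real (G n)" .
    then have "ln (?x ^ e) \<le> ln (real (G n))"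
      using x_pos by (intro ln_mono) simp_all
    then have "real e * ln ?x \<le> ln (real (G n))"
      by (simp add: ln_realpow)
    moreover have "0 < ln (real n)"
      using elim by simp
    ultimately show ?case
      by (simp add: divide_right_mono)
  qed
  then have "limsup (\<lambda>n. ereal (?l n)) \<le> limsup (\<lambda>n. ereal (ln (real (G n)) / ln (real n)))"
    by (intro Limsup_mono) (simp add: eventually_mono)
  ultimately show ?thesis
    by simp
qed

lemma ln_le_of_le_power:
  assumes "k \<le> (M * n + 1) ^ e" and "n \<ge> 1"
  shows "ln (real k) \<le> real e * ln (real M + 1) + real e * ln (real n)"
proof (cases "k = 0")
  case True
  then show ?thesis
    using assms(2) by simp
next
  case False
  have "real k \<le> (real M * real n + 1) ^ e"
    using assms(1) by (metis of_nat_1 of_nat_add of_nat_le_iff of_nat_mult of_nat_power)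
  also have "\<dots> \<le> ((real M + 1) * real n) ^ e"
    using assms(2) by (intro power_mono) (auto simp: algebra_simps)
  finally have "ln (real k) \<le> ln (((real M + 1) * real n) ^ e)"
    using False by simp
  also have "\<dots> = real e * (ln (real M + 1) + ln (real n))"
    using assms(2) by (simp add: ln_realpow ln_mult)
  finally show ?thesis
    by (simp add: distrib_left)
qed

lemma limsup_ln_ratio_le:
  fixes G :: "nat \<Rightarrow> nat"
  assumes G: "\<And>n. G n \<le> (M * n + 1) ^ e"
  shows "limsup (\<lambda>n. ereal (ln (real (G n)) / ln (real n))) \<le> ereal (real e)"
proof -
  let ?u = "\<lambda>n. real e * ln (real M + 1) / ln (real n) + real e"
  have "(?u \<longlongrightarrow> real e) sequentially"
    by real_asymp
  then have "limsup (\<lambda>n. ereal (?u n)) = ereal (real e)"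
    by (intro lim_imp_Limsup) (simp_all add: tendsto_ereal)
  moreover have "eventually (\<lambda>n. ln (real (G n)) / ln (real n) \<le> ?u n) sequentially"
    using eventually_ge_at_top[of 2]
  proof eventually_elim
    case (elim n)
    have "0 < ln (real n)"
      using elim by simp
    then show ?case
      using ln_le_of_le_power[OF G, of n] elim
      by (simp add: divide_right_mono add_divide_distrib[symmetric] field_simps)
  qed
  then have "limsup (\<lambda>n. ereal (ln (real (G n)) / ln (real n))) \<le> limsup (\<lambda>n. ereal (?u n))"
    by (intro Limsup_mono) (simp add: eventually_mono)
  ultimately show ?thesis
    by simp
qed

lemma GKdim_Hq_eq_limsup:
  "GKdim_Hq q f g = limsup (\<lambda>n. ereal (ln (real (growth (Hq_ideal q f g) n)) / ln (real n)))"
  unfolding GKdim_Hq_def GKdim_pres_def ..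

lemma GKdim_Hq_ge_3:
  fixes q :: "'a::field" and f g :: "'a poly"
  shows "3 \<le> GKdim_Hq q f g"
  using limsup_ln_ratio_ge[of 3 3, OF _ growth_Hq_ge_cube] unfolding GKdim_Hq_eq_limsup by simp

lemma GKdim_Hq_le_3:
  fixes q :: "'a::field" and f g :: "'a poly"
  assumes "degree f \<le> 1"
  shows "GKdim_Hq q f g \<le> 3"
  using limsup_ln_ratio_le[of _ "xy_weight g" 3, OF growth_Hq_le[OF assms]]
  unfolding GKdim_Hq_eq_limsup by simp

lemma GKdim_Hq_ge_4:
  fixes q :: "'a::field" and f g :: "'a poly"
  assumes "degree f \<ge> 2"
  shows "4 \<le> GKdim_Hq q f g"
proof -
  have "ereal (real 4) \<le> limsup (\<lambda>n. ereal (ln (real (growth (Hq_ideal q f g) n)) / ln (real n)))"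
    by (intro limsup_ln_ratio_ge[of 6]) (simp_all add: growth_Hq_ge_fourth_power[OF assms])
  then show ?thesis
    unfolding GKdim_Hq_eq_limsup by simp
qed

theorem proposition2p3:
  fixes q :: "'a::field" and f g :: "'a poly"
  shows "(GKdim_Hq q f g = 3 \<longleftrightarrow> degree f \<le> 1) \<and>
         (degree f > 1 \<longrightarrow> GKdim_Hq q f g \<ge> 4)"
proof (intro conjI impI iffI)
  assume GK_3: "GKdim_Hq q f g = 3"
  show "degree f \<le> 1"
  proof (rule ccontr)
    assume "\<not> degree f \<le> 1"
    then have "4 \<le> GKdim_Hq q f g"
      by (intro GKdim_Hq_ge_4) simp
    then show False
      unfolding GK_3 by simp
  qed
next
  assume "degree f \<le> 1"
  then show "GKdim_Hq q f g = 3"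
    by (intro antisym GKdim_Hq_le_3 GKdim_Hq_ge_3)
next
  assume "degree f > 1"
  then show "4 \<le> GKdim_Hq q f g"
    by (intro GKdim_Hq_ge_4) simp
qed

end
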